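(* Let $k\ge3$ and let $G=(V,E)$ be a connected $k$-uniform hypergraph (with $E\neq\emptyset$). (i) A nonzero vector $\mathbf x\in\mathbb C^n$ is an eigenvector of the Laplacian tensor $\mathcal D-\mathcal A$ corresponding to the eigenvalue $0$ if and only if there exist $\gamma\in\mathbb C\setminus\{0\}$ and integers $\alpha_i$ ($i\in[n]$) such that $x_i=\gamma\exp(\frac{2\alpha_i\pi}{k}\sqrt{-1})$ for all $i\in[n]$ and, for every edge $e\in E$, $\sum_{j\in e}\alpha_j=\sigma_e k$ for some integer $\sigma_e$. (ii) A nonzero vector $\mathbf x\in\mathbb C^n$ is an eigenvector of the signless Laplacian tensor $\mathcal D+\mathcal A$ corresponding to the eigenvalue $0$ if and only if there exist $\gamma\in\mathbb C\setminus\{0\}$ and integers $\alpha_i$ ($i\in[n]$) such that $x_i=\gamma\exp(\frac{2\alpha_i\pi}{k}\sqrt{-1})$ for all $i\in[n]$ and, for every edge $e\in E$, $\sum_{j\in e}\alpha_j=\sigma_e k+\frac{k}{2}$ for some integer $\sigma_e$.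
   Context: A $k$-uniform hypergraph $G=(V,E)$ has vertex set $V=[n]$ ($n\ge k$) and edge set $E$ of $k$-element subsets of $V$; $E_i=\{e\in E:i\in e\}$, $d_i=|E_i|$. $G$ is connected if every two distinct vertices $i,j$ are joined by a sequence of edges $e_1,\dots,e_m$ with $i\in e_1$, $j\in e_m$, $e_r\cap e_{r+1}\neq\emptyset$. The adjacency tensor $\mathcal A$ has $a_{i_1\dots i_k}=\frac1{(k-1)!}$ if $\{i_1,\dots,i_k\}\in E$, else $0$; $\mathcal D$ is diagonal with $d_{i\dots i}=d_i$. Thus $((\mathcal D\pm\mathcal A)\mathbf x^{k-1})_i=d_ix_i^{k-1}\pm\sum_{e\in E_i}\prod_{j\in e\setminus\{i\}}x_j$. A nonzero $\mathbf x\in\mathbb C^n$ is an eigenvector of a tensor $\mathcal T$ for eigenvalue $\lambda$ if $(\mathcal T\mathbf x^{k-1})_i=\lambda x_i^{k-1}$ for all $i\in[n]$, where $(\mathcal T\mathbf x^{k-1})_i=\sum_{i_2,\dots,i_k}t_{ii_2\dots i_k}x_{i_2}\cdots x_{i_k}$. *)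

theory Defs
  imports "HOL-Analysis.Analysis"
begin

definition uniform_hypergraph :: "nat \<Rightarrow> nat \<Rightarrow> nat set set \<Rightarrow> bool" where
  "uniform_hypergraph n k E \<longleftrightarrow> n \<ge> k \<and> (\<forall>e\<in>E. e \<subseteq> {1..n} \<and> card e = k)"

definition hg_connected :: "nat \<Rightarrow> nat set set \<Rightarrow> bool" where
  "hg_connected n E \<longleftrightarrow> (\<forall>i\<in>{1..n}. \<forall>j\<in>{1..n}. i \<noteq> j \<longrightarrow>
     (\<exists>es :: nat set list. es \<noteq> [] \<and> set es \<subseteq> E \<and> i \<in> hd es \<and> j \<in> last es \<and>
        (\<forall>r. Suc r < length es \<longrightarrow> es ! r \<inter> es ! Suc r \<noteq> {})))"

definition hg_degree :: "nat set set \<Rightarrow> nat \<Rightarrow> nat" where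
  "hg_degree E i = card {e\<in>E. i \<in> e}"

text \<open>Order-k tensors of dimension n: entries indexed by lists of length k over [n].\<close>

definition adj_tensor :: "nat \<Rightarrow> nat set set \<Rightarrow> nat list \<Rightarrow> complex" where
  "adj_tensor k E is = (if set is \<in> E then 1 / of_nat (fact (k - 1)) else 0)"

definition deg_tensor :: "nat set set \<Rightarrow> nat list \<Rightarrow> complex" where
  "deg_tensor E is = (if is \<noteq> [] \<and> (\<forall>j\<in>set is. j = hd is) then of_nat (hg_degree E (hd is)) else 0)"

definition tensor_apply :: "nat \<Rightarrow> nat \<Rightarrow> (nat list \<Rightarrow> complex) \<Rightarrow> (nat \<Rightarrow> complex) \<Rightarrow> nat \<Rightarrow> complex" where
  "tensor_apply n k T x i =
     (\<Sum>is\<in>{is. length is = k - 1 \<and> set is \<subseteq> {1..n}}. T (i # is) * (\<Prod>j\<leftarrow>is. x j))"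

definition tensor_eigenpair :: "nat \<Rightarrow> nat \<Rightarrow> (nat list \<Rightarrow> complex) \<Rightarrow> complex \<Rightarrow> (nat \<Rightarrow> complex) \<Rightarrow> bool" where
  "tensor_eigenpair n k T lam x \<longleftrightarrow> (\<exists>i\<in>{1..n}. x i \<noteq> 0) \<and>
     (\<forall>i\<in>{1..n}. tensor_apply n k T x i = lam * x i ^ (k - 1))"

definition laplacian_tensor :: "nat \<Rightarrow> nat set set \<Rightarrow> nat list \<Rightarrow> complex" where
  "laplacian_tensor k E is = deg_tensor E is - adj_tensor k E is"

definition signless_laplacian_tensor :: "nat \<Rightarrow> nat set set \<Rightarrow> nat list \<Rightarrow> complex" where
  "signless_laplacian_tensor k E is = deg_tensor E is + adj_tensor k E is"

end

theory Submission
  imports Defs "HOL-Combinatorics.Multiset_Permutations"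
begin

text \<open>
  Both tensors are D - t A with |t| = 1 (t = 1 resp. t = -1), and (A x^(k-1))_i is the sum over
  the edges e through i of the products of x_j over e - {i}. Take a vertex i of maximal modulus M
  in a 0-eigenvector: the d_i summands have modulus at most M^(k-1) and add up to
  d_i x_i^(k-1) / t, of modulus d_i M^(k-1), so each summand equals x_i^(k-1) / t and every vertex
  of these edges has modulus M as well. By connectivity this holds everywhere, hence x_i^k is a
  constant c and t times the product of x over each edge is c. Writing c = \<gamma>^k, every x_i / \<gamma>
  is a k-th root of unity exp(2 \<alpha>_i \<pi> i / k), and the edge condition says that the root of
  unity with exponent the sum of \<alpha>_j over e equals 1 / t; conversely such vectors are
  0-eigenvectors by direct computation.
\<close>

definition adj_form :: "nat set set \<Rightarrow> (nat \<Rightarrow> complex) \<Rightarrow> nat \<Rightarrow> complex" where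
  "adj_form E x i = (\<Sum>e\<in>{e\<in>E. i \<in> e}. \<Prod>j\<in>e - {i}. x j)"

definition unit_root :: "nat \<Rightarrow> int \<Rightarrow> complex" where
  "unit_root k a = exp (complex_of_real (2 * real_of_int a * pi / real k) * \<i>)"

lemma uniform_hypergraph_finite:
  assumes "uniform_hypergraph n k E"
  shows "finite E"
  using assms unfolding uniform_hypergraph_def
  by (intro finite_subset[of E "Pow {1..n}"]) auto

lemma uniform_hypergraph_edgeD:
  assumes "uniform_hypergraph n k E" "e \<in> E"
  shows "e \<subseteq> {1..n}" "card e = k" "finite e"
  using assms unfolding uniform_hypergraph_def by (auto intro: finite_subset)

lemma hg_connected_propagate:
  assumes conn: "hg_connected n E"
    and i0: "i0 \<in> {1..n}" "P i0"
    and step: "\<And>e i j. e \<in> E \<Longrightarrow> i \<in> e \<Longrightarrow> j \<in> e \<Longrightarrow> P i \<Longrightarrow> P j"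
    and j: "j \<in> {1..n}"
  shows "P j"
proof (cases "j = i0")
  case True
  then show ?thesis using i0 by simp
next
  case False
  then obtain es where es: "es \<noteq> []" "set es \<subseteq> E" "i0 \<in> hd es" "j \<in> last es"
      and chain: "\<And>r. Suc r < length es \<Longrightarrow> es ! r \<inter> es ! Suc r \<noteq> {}"
    using conn i0(1) j unfolding hg_connected_def by metis
  have "\<forall>v\<in>es ! r. P v" if "r < length es" for r
    using that
  proof (induction r)
    case 0
    then show ?case
      using es step i0(2) by (metis hd_conv_nth nth_mem subsetD)
  next
    case (Suc r)
    then obtain v where "v \<in> es ! r" "v \<in> es ! Suc r" using chain by blast
    then show ?case
      using Suc es(2) step by (metis Suc_lessD nth_mem subsetD)
  qed
  then show ?thesis
    using es(1,4) by (metis last_conv_nth diff_less length_greater_0_conv zero_less_one)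
qed

subsection \<open>Evaluating the tensors\<close>

lemma finite_tensor_indices: "finite {is. length is = m \<and> set is \<subseteq> {1..n::nat}}"
  using finite_lists_length_eq[of "{1..n}" m] by (simp add: conj_commute)

lemma tensor_apply_diff_scaled:
  "tensor_apply n k (\<lambda>is. S is - t * T is) x i = tensor_apply n k S x i - t * tensor_apply n k T x i"
  unfolding tensor_apply_def
  by (simp add: left_diff_distrib sum_subtractf sum_distrib_left mult.assoc)

lemma tensor_apply_deg_tensor:
  assumes "i \<in> {1..n}"
  shows "tensor_apply n k (deg_tensor E) x i = of_nat (hg_degree E i) * x i ^ (k - 1)"
proof -
  let ?S = "{is. length is = k - 1 \<and> set is \<subseteq> {1..n}}"
  let ?r = "replicate (k - 1) i"
  have "deg_tensor E (i # is) = 0" if "is \<in> ?S - {?r}" for "is"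
    using that replicate_length_same[of "is" i] by (auto simp: deg_tensor_def)
  then have "tensor_apply n k (deg_tensor E) x i = deg_tensor E (i # ?r) * (\<Prod>j\<leftarrow>?r. x j)"
    unfolding tensor_apply_def using assms finite_tensor_indices
    by (subst sum.remove[of _ ?r]) (auto intro!: sum.neutral)
  then show ?thesis
    by (simp add: deg_tensor_def)
qed

lemma edge_index_lists:
  assumes U: "uniform_hypergraph n k E" and "k > 0" and e: "e \<in> E" "i \<in> e"
  shows "{is. (length is = k - 1 \<and> set is \<subseteq> {1..n}) \<and> set (i # is) = e}
         = permutations_of_set (e - {i})"
proof (intro set_eqI iffI)
  fix "is" assume h: "is \<in> {is. (length is = k - 1 \<and> set is \<subseteq> {1..n}) \<and> set (i # is) = e}"
  then have "card (set (i # is)) = length (i # is)"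
    using uniform_hypergraph_edgeD[OF U e(1)] \<open>k > 0\<close> by auto
  then have "distinct (i # is)" by (rule card_distinct)
  then show "is \<in> permutations_of_set (e - {i})"
    using h by (auto simp: permutations_of_set_def)
next
  fix "is" assume "is \<in> permutations_of_set (e - {i})"
  then have d: "distinct is" "set is = e - {i}" by (auto simp: permutations_of_set_def)
  then have "length is = k - 1"
    using distinct_card[OF d(1)] uniform_hypergraph_edgeD[OF U e(1)] e(2) by simp
  then show "is \<in> {is. (length is = k - 1 \<and> set is \<subseteq> {1..n}) \<and> set (i # is) = e}"
    using d e uniform_hypergraph_edgeD[OF U e(1)] by auto
qed

text \<open>Each edge e containing i is hit by the (k-1)! orderings of e - {i}, which cancels
  the factor 1/(k-1)! of the adjacency tensor.\<close>
lemma tensor_apply_adj_tensor: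
  assumes U: "uniform_hypergraph n k E" and "k > 0"
  shows "tensor_apply n k (adj_tensor k E) x i = adj_form E x i"
proof -
  let ?S = "{is. length is = k - 1 \<and> set is \<subseteq> {1..n}}"
  let ?c = "1 / of_nat (fact (k - 1)) :: complex"
  have finE: "finite E" using U by (rule uniform_hypergraph_finite)
  have finS: "finite {is\<in>?S. set (i # is) \<in> E}"
    by (rule finite_subset[OF _ finite_tensor_indices]) auto
  have "tensor_apply n k (adj_tensor k E) x i
        = (\<Sum>is\<in>?S. if set (i # is) \<in> E then ?c * (\<Prod>j\<leftarrow>is. x j) else 0)"
    unfolding tensor_apply_def adj_tensor_def by (intro sum.cong) auto
  also have "\<dots> = (\<Sum>is\<in>{is\<in>?S. set (i # is) \<in> E}. ?c * (\<Prod>j\<leftarrow>is. x j))"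
    by (rule sum.inter_filter[OF finite_tensor_indices, symmetric])
  also have "\<dots> = (\<Sum>e\<in>{e\<in>E. i \<in> e}.
                    \<Sum>is\<in>{is\<in>{is\<in>?S. set (i # is) \<in> E}. set (i # is) = e}. ?c * (\<Prod>j\<leftarrow>is. x j))"
    by (rule sum.group[symmetric]) (use finE finS in auto)
  also have "\<dots> = adj_form E x i"
    unfolding adj_form_def
  proof (rule sum.cong[OF refl])
    fix e assume e: "e \<in> {e\<in>E. i \<in> e}"
    then have lists: "{is\<in>{is\<in>?S. set (i # is) \<in> E}. set (i # is) = e} = permutations_of_set (e - {i})"
      using edge_index_lists[OF U \<open>k > 0\<close>, of e i] by auto
    have "(\<Prod>j\<leftarrow>is. x j) = (\<Prod>j\<in>e - {i}. x j)" if "is \<in> permutations_of_set (e - {i})" for "is"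
      using that prod.distinct_set_conv_list[of "is" x] by (auto simp: permutations_of_set_def)
    then show "(\<Sum>is\<in>{is\<in>{is\<in>?S. set (i # is) \<in> E}. set (i # is) = e}. ?c * (\<Prod>j\<leftarrow>is. x j))
               = (\<Prod>j\<in>e - {i}. x j)"
      unfolding lists using e uniform_hypergraph_edgeD[OF U, of e] by simp
  qed
  finally show ?thesis .
qed

lemma tensor_eigenpair_deg_adj_zero_iff:
  assumes "uniform_hypergraph n k E" and "k > 0"
  shows "tensor_eigenpair n k (\<lambda>is. deg_tensor E is - t * adj_tensor k E is) 0 x \<longleftrightarrow>
           (\<exists>i\<in>{1..n}. x i \<noteq> 0) \<and>
           (\<forall>i\<in>{1..n}. t * adj_form E x i = of_nat (hg_degree E i) * x i ^ (k - 1))"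
  unfolding tensor_eigenpair_def tensor_apply_diff_scaled
  using tensor_apply_deg_tensor tensor_apply_adj_tensor[OF assms] by auto

subsection \<open>Maximum modulus argument\<close>

lemma sum_eq_card_mult_imp_all_eq:
  fixes z :: "'a \<Rightarrow> complex"
  assumes fin: "finite T" and le: "\<And>e. e \<in> T \<Longrightarrow> norm (z e) \<le> norm u"
    and sum: "(\<Sum>e\<in>T. z e) = of_nat (card T) * u"
  shows "\<forall>e\<in>T. z e = u"
proof -
  have sq: "(norm (z e - u))\<^sup>2 = (norm (z e))\<^sup>2 + (norm u)\<^sup>2 - 2 * Re (z e * cnj u)" for e
    unfolding cmod_power2 by (simp add: power2_eq_square algebra_simps)
  have "(\<Sum>e\<in>T. (norm (z e - u))\<^sup>2)
        = (\<Sum>e\<in>T. (norm (z e))\<^sup>2) + card T * (norm u)\<^sup>2 - 2 * (\<Sum>e\<in>T. Re (z e * cnj u))"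
    by (simp add: sq sum.distrib sum_subtractf sum_distrib_left)
  also have "(\<Sum>e\<in>T. Re (z e * cnj u)) = Re ((\<Sum>e\<in>T. z e) * cnj u)"
    by (simp add: sum_distrib_right)
  also have "\<dots> = card T * (norm u)\<^sup>2"
    using sum by (simp add: mult.assoc complex_mult_cnj flip: cmod_power2)
  also have "(\<Sum>e\<in>T. (norm (z e))\<^sup>2) \<le> (\<Sum>e\<in>T. (norm u)\<^sup>2)"
    by (rule sum_mono) (use le in \<open>auto intro: power_mono\<close>)
  finally have "(\<Sum>e\<in>T. (norm (z e - u))\<^sup>2) \<le> 0" by simp
  then have "(\<Sum>e\<in>T. (norm (z e - u))\<^sup>2) = 0"
    by (meson antisym sum_nonneg zero_le_power2)
  then show ?thesis
    by (subst (asm) sum_nonneg_eq_0_iff[OF fin]) auto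
qed

lemma prod_eq_power_card_imp_all_eq:
  fixes f :: "'a \<Rightarrow> real"
  assumes fin: "finite A" and bnd: "\<And>a. a \<in> A \<Longrightarrow> 0 \<le> f a \<and> f a \<le> M" and "M > 0"
    and eq: "(\<Prod>a\<in>A. f a) = M ^ card A"
  shows "\<forall>a\<in>A. f a = M"
proof (rule ccontr)
  assume "\<not> (\<forall>a\<in>A. f a = M)"
  then obtain a where a: "a \<in> A" "f a < M" using bnd by force
  have "(\<Prod>a\<in>A. f a) = f a * (\<Prod>b\<in>A - {a}. f b)"
    using prod.remove[OF fin a(1)] by simp
  also have "\<dots> \<le> f a * M ^ (card A - 1)"
  proof (rule mult_left_mono)
    have "(\<Prod>b\<in>A - {a}. f b) \<le> (\<Prod>b\<in>A - {a}. M)" by (rule prod_mono) (use bnd in auto)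
    then show "(\<Prod>b\<in>A - {a}. f b) \<le> M ^ (card A - 1)" using fin a(1) by simp
  qed (use bnd a in auto)
  also have "\<dots> < M * M ^ (card A - 1)" using a \<open>M > 0\<close> by simp
  also have "\<dots> = M ^ card A"
    using fin a(1) by (metis card_gt_0_iff empty_iff power_eq_if zero_less_iff_neq_zero)
  finally show False using eq by simp
qed

lemma tight_edges_at_max_modulus:
  fixes x :: "nat \<Rightarrow> complex"
  assumes U: "uniform_hypergraph n k E" and t: "norm t = 1" and "M > 0"
    and le: "\<And>j. j \<in> {1..n} \<Longrightarrow> norm (x j) \<le> M" and i: "norm (x i) = M"
    and eq: "t * adj_form E x i = of_nat (hg_degree E i) * x i ^ (k - 1)"
    and e: "e \<in> E" "i \<in> e"
  shows "t * (\<Prod>j\<in>e - {i}. x j) = x i ^ (k - 1)" and "\<forall>j\<in>e. norm (x j) = M"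
proof -
  let ?T = "{e\<in>E. i \<in> e}"
  have edge: "finite (e' - {i})" "card (e' - {i}) = k - 1" "e' - {i} \<subseteq> {1..n}" if "e' \<in> ?T" for e'
    using that uniform_hypergraph_edgeD[OF U, of e'] by auto
  have norm_prod: "norm (t * (\<Prod>j\<in>e' - {i}. x j)) = (\<Prod>j\<in>e' - {i}. norm (x j))" for e'
    using t by (simp add: norm_mult prod_norm)
  have "norm (t * (\<Prod>j\<in>e' - {i}. x j)) \<le> norm (x i ^ (k - 1))" if "e' \<in> ?T" for e'
  proof -
    have "(\<Prod>j\<in>e' - {i}. norm (x j)) \<le> (\<Prod>j\<in>e' - {i}. M)"
      using edge[OF that] le by (intro prod_mono) auto
    then show ?thesis using edge[OF that] i by (simp add: norm_prod norm_power)
  qed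
  moreover have "(\<Sum>e'\<in>?T. t * (\<Prod>j\<in>e' - {i}. x j)) = of_nat (card ?T) * x i ^ (k - 1)"
    using eq by (simp add: adj_form_def hg_degree_def sum_distrib_left)
  ultimately have tight: "\<forall>e'\<in>?T. t * (\<Prod>j\<in>e' - {i}. x j) = x i ^ (k - 1)"
    using uniform_hypergraph_finite[OF U] by (intro sum_eq_card_mult_imp_all_eq) auto
  then show "t * (\<Prod>j\<in>e - {i}. x j) = x i ^ (k - 1)" using e by blast
  have "e \<in> ?T" using e by blast
  then have "(\<Prod>j\<in>e - {i}. norm (x j)) = norm (x i ^ (k - 1))"
    using tight by (metis norm_prod)
  then have "(\<Prod>j\<in>e - {i}. norm (x j)) = M ^ card (e - {i})"
    using edge[OF \<open>e \<in> ?T\<close>] i by (simp add: norm_power)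
  then have "\<forall>j\<in>e - {i}. norm (x j) = M"
    using edge[OF \<open>e \<in> ?T\<close>] le \<open>M > 0\<close> by (intro prod_eq_power_card_imp_all_eq) auto
  then show "\<forall>j\<in>e. norm (x j) = M" using i by blast
qed

lemma modulus_constant_if_eigen_equation:
  fixes x :: "nat \<Rightarrow> complex"
  assumes U: "uniform_hypergraph n k E" and C: "hg_connected n E" and t: "norm t = 1"
    and nz: "\<exists>i\<in>{1..n}. x i \<noteq> 0"
    and eq: "\<forall>i\<in>{1..n}. t * adj_form E x i = of_nat (hg_degree E i) * x i ^ (k - 1)"
  shows "\<exists>M>0. \<forall>j\<in>{1..n}. norm (x j) = M"
proof -
  define M where "M = Max ((\<lambda>i. norm (x i)) ` {1..n})"
  have le: "\<And>j. j \<in> {1..n} \<Longrightarrow> norm (x j) \<le> M"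
    unfolding M_def by simp
  obtain i0 where i0: "i0 \<in> {1..n}" "norm (x i0) = M"
    using Max_in[of "(\<lambda>i. norm (x i)) ` {1..n}"] nz unfolding M_def by fastforce
  have "M > 0" using nz le by (metis norm_le_zero_iff not_less order_trans)
  have "norm (x j) = M" if "j \<in> {1..n}" for j
  proof (rule hg_connected_propagate[of n E i0 "\<lambda>j. norm (x j) = M", OF C i0 _ that])
    show "norm (x j') = M" if e: "e \<in> E" "i \<in> e" and "j' \<in> e" "norm (x i) = M" for e i j'
    proof -
      have "i \<in> {1..n}" using uniform_hypergraph_edgeD(1)[OF U e(1)] e(2) by blast
      then show ?thesis
        using tight_edges_at_max_modulus(2)[OF U t \<open>M > 0\<close>, of x, OF le _ _ e] that eq by blast
    qed
  qed
  then show ?thesis using \<open>M > 0\<close> by blast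
qed

lemma power_constant_if_eigen_equation:
  fixes x :: "nat \<Rightarrow> complex"
  assumes U: "uniform_hypergraph n k E" and "k > 0" and C: "hg_connected n E" and t: "norm t = 1"
    and nz: "\<exists>i\<in>{1..n}. x i \<noteq> 0"
    and eq: "\<forall>i\<in>{1..n}. t * adj_form E x i = of_nat (hg_degree E i) * x i ^ (k - 1)"
  shows "\<exists>c. c \<noteq> 0 \<and> (\<forall>i\<in>{1..n}. x i ^ k = c) \<and> (\<forall>e\<in>E. t * (\<Prod>j\<in>e. x j) = c)"
proof -
  obtain M where "M > 0" and M: "\<And>j. j \<in> {1..n} \<Longrightarrow> norm (x j) = M"
    using modulus_constant_if_eigen_equation[OF U C t nz eq] by blast
  have sub: "e \<subseteq> {1..n}" if "e \<in> E" for e using uniform_hypergraph_edgeD[OF U that] by blast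
  have edge_prod: "t * (\<Prod>j\<in>e. x j) = x i ^ k" if e: "e \<in> E" "i \<in> e" for e i
  proof -
    have "i \<in> {1..n}" using sub[OF e(1)] e(2) by blast
    then have "t * (\<Prod>j\<in>e - {i}. x j) = x i ^ (k - 1)"
      using tight_edges_at_max_modulus(1)[OF U t \<open>M > 0\<close>, of x] M eq e by auto
    then have "t * (\<Prod>j\<in>e. x j) = x i * x i ^ (k - 1)"
      using prod.remove[OF uniform_hypergraph_edgeD(3)[OF U e(1)] e(2), of x]
      by (simp add: mult.left_commute)
    then show ?thesis
      using \<open>k > 0\<close> by (cases k) simp_all
  qed
  have "1 \<in> {1..n}" using U \<open>k > 0\<close> by (simp add: uniform_hypergraph_def)
  define c where "c = x 1 ^ k"
  have c: "x j ^ k = c" if "j \<in> {1..n}" for j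
    by (rule hg_connected_propagate[of n E 1 "\<lambda>j. x j ^ k = c", OF C \<open>1 \<in> {1..n}\<close> _ _ that])
      (use edge_prod c_def in metis)+
  have "c \<noteq> 0" using M[OF \<open>1 \<in> {1..n}\<close>] \<open>M > 0\<close> by (auto simp: c_def)
  moreover have "t * (\<Prod>j\<in>e. x j) = c" if e: "e \<in> E" for e
  proof -
    obtain i where "i \<in> e"
      using uniform_hypergraph_edgeD(2)[OF U e] \<open>k > 0\<close> by fastforce
    then show ?thesis using edge_prod[OF e] c sub[OF e] by auto
  qed
  ultimately show ?thesis using c by blast
qed

lemma eigen_equation_if_power_constant:
  fixes x :: "nat \<Rightarrow> complex"
  assumes U: "uniform_hypergraph n k E" and "k > 0" and "c \<noteq> 0"
    and pow: "\<forall>i\<in>{1..n}. x i ^ k = c" and edge: "\<forall>e\<in>E. t * (\<Prod>j\<in>e. x j) = c"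
  shows "(\<exists>i\<in>{1..n}. x i \<noteq> 0) \<and>
         (\<forall>i\<in>{1..n}. t * adj_form E x i = of_nat (hg_degree E i) * x i ^ (k - 1))"
proof -
  have nz: "x i \<noteq> 0" if "i \<in> {1..n}" for i
    using pow that \<open>c \<noteq> 0\<close> \<open>k > 0\<close> by fastforce
  have "1 \<in> {1..n}" using U \<open>k > 0\<close> by (simp add: uniform_hypergraph_def)
  moreover have "t * adj_form E x i = of_nat (hg_degree E i) * x i ^ (k - 1)"
    if i: "i \<in> {1..n}" for i
  proof -
    have "t * (\<Prod>j\<in>e - {i}. x j) = x i ^ (k - 1)" if e: "e \<in> E" "i \<in> e" for e
    proof -
      have "x i * (t * (\<Prod>j\<in>e - {i}. x j)) = t * (\<Prod>j\<in>e. x j)"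
        using prod.remove[OF uniform_hypergraph_edgeD(3)[OF U e(1)] e(2), of x]
        by (simp add: mult.left_commute)
      also have "\<dots> = x i ^ k" using edge pow e i by simp
      also have "\<dots> = x i * x i ^ (k - 1)" using \<open>k > 0\<close> by (cases k) simp_all
      finally have "x i * (t * (\<Prod>j\<in>e - {i}. x j)) = x i * x i ^ (k - 1)" .
      then show ?thesis using nz[OF i] by simp
    qed
    then show ?thesis
      by (simp add: adj_form_def hg_degree_def sum_distrib_left)
  qed
  ultimately show ?thesis using nz by blast
qed

subsection \<open>Roots of unity\<close>

lemma unit_root_add: "unit_root k (a + b) = unit_root k a * unit_root k b"
  by (simp add: unit_root_def distrib_left distrib_right add_divide_distrib exp_add)

lemma unit_root_0: "unit_root k 0 = 1"
  by (simp add: unit_root_def)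

lemma prod_unit_root: "(\<Prod>j\<in>A. unit_root k (\<alpha> j)) = unit_root k (\<Sum>j\<in>A. \<alpha> j)"
  by (induction A rule: infinite_finite_induct) (simp_all add: unit_root_0 unit_root_add)

lemma unit_root_power: "k > 0 \<Longrightarrow> unit_root k a ^ k = 1"
  unfolding unit_root_def exp_of_nat_mult[symmetric]
  by (simp add: exp_eq_1 field_simps)

lemma ex_unit_root_eq:
  assumes "w ^ k = 1" "k > 0"
  shows "\<exists>m. w = unit_root k m"
proof -
  have "w \<noteq> 0" using assms by (metis power_0_left zero_neq_one neq0_conv)
  then have "exp (of_nat k * Ln w) = 1" using assms by (simp add: exp_of_nat_mult)
  then obtain m :: int where "Re (of_nat k * Ln w) = 0" "Im (of_nat k * Ln w) = of_int (2 * m) * pi"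
    by (auto simp: exp_eq_1)
  then have "Ln w = complex_of_real (2 * real_of_int m * pi / real k) * \<i>"
    using assms(2) by (simp add: complex_eq_iff field_simps)
  then have "w = unit_root k m" using \<open>w \<noteq> 0\<close> by (metis exp_Ln unit_root_def)
  then show ?thesis ..
qed

lemma unit_root_eq_1_iff: "k > 0 \<Longrightarrow> unit_root k s = 1 \<longleftrightarrow> (\<exists>\<sigma>. s = \<sigma> * int k)"
proof -
  assume k: "k > 0"
  have "unit_root k s = 1 \<longleftrightarrow> (\<exists>m::int. 2 * real_of_int s * pi / real k = of_int (2 * m) * pi)"
    by (simp add: unit_root_def exp_eq_1)
  also have "\<dots> \<longleftrightarrow> (\<exists>m::int. real_of_int s = of_int m * real k)"
    using k by (intro ex_cong1) (auto simp: field_simps)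
  also have "\<dots> \<longleftrightarrow> (\<exists>\<sigma>. s = \<sigma> * int k)"
    by (intro ex_cong1) (metis of_int_eq_iff of_int_mult of_int_of_nat_eq)
  finally show ?thesis .
qed

lemma unit_root_double: "unit_root k a = unit_root (2 * k) (2 * a)"
  by (simp add: unit_root_def mult_ac)

lemma unit_root_half_turn:
  assumes "k > 0"
  shows "unit_root (2 * k) (int k) = -1"
proof -
  have "2 * real_of_int (int k) * pi / real (2 * k) = pi" using assms by simp
  then show ?thesis by (simp add: unit_root_def exp_pi_i')
qed

lemma unit_root_eq_minus_1_iff:
  assumes "k > 0"
  shows "unit_root k s = -1 \<longleftrightarrow> (\<exists>\<sigma>. 2 * s = 2 * \<sigma> * int k + int k)"
proof -
  have "unit_root k s = unit_root (2 * k) (2 * s - int k + int k)"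
    by (simp add: unit_root_double[of k s])
  also have "\<dots> = unit_root (2 * k) (2 * s - int k) * unit_root (2 * k) (int k)"
    by (rule unit_root_add)
  finally have "unit_root k s = unit_root (2 * k) (2 * s - int k) * unit_root (2 * k) (int k)" .
  then have "unit_root k s = -1 \<longleftrightarrow> unit_root (2 * k) (2 * s - int k) = 1"
    using unit_root_half_turn[OF assms] by auto
  also have "\<dots> \<longleftrightarrow> (\<exists>\<sigma>. 2 * s - int k = \<sigma> * int (2 * k))"
    using assms by (intro unit_root_eq_1_iff) simp
  also have "\<dots> \<longleftrightarrow> (\<exists>\<sigma>. 2 * s = 2 * \<sigma> * int k + int k)"
    by (intro ex_cong1) (simp add: algebra_simps)
  finally show ?thesis .
qed

lemma power_constant_iff_unit_root_form:
  fixes x :: "nat \<Rightarrow> complex"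
  assumes U: "uniform_hypergraph n k E" and k: "k > 0"
  shows "(\<exists>c. c \<noteq> 0 \<and> (\<forall>i\<in>{1..n}. x i ^ k = c) \<and> (\<forall>e\<in>E. t * (\<Prod>j\<in>e. x j) = c))
     \<longleftrightarrow> (\<exists>\<gamma> \<alpha>. \<gamma> \<noteq> 0 \<and> (\<forall>i\<in>{1..n}. x i = \<gamma> * unit_root k (\<alpha> i)) \<and>
            (\<forall>e\<in>E. t * unit_root k (\<Sum>j\<in>e. \<alpha> j) = 1))"
proof -
  have edge_prod: "(\<Prod>j\<in>e. x j) = \<gamma> ^ k * unit_root k (\<Sum>j\<in>e. \<alpha> j)"
    if e: "e \<in> E" and x: "\<forall>i\<in>{1..n}. x i = \<gamma> * unit_root k (\<alpha> i)" for e \<gamma> \<alpha>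
  proof -
    have "(\<Prod>j\<in>e. x j) = (\<Prod>j\<in>e. \<gamma> * unit_root k (\<alpha> j))"
      using x uniform_hypergraph_edgeD(1)[OF U e] by (intro prod.cong) auto
    then show ?thesis
      using uniform_hypergraph_edgeD(2)[OF U e] by (simp add: prod.distrib prod_unit_root)
  qed
  show ?thesis
  proof
    assume "\<exists>c. c \<noteq> 0 \<and> (\<forall>i\<in>{1..n}. x i ^ k = c) \<and> (\<forall>e\<in>E. t * (\<Prod>j\<in>e. x j) = c)"
    then obtain c where c: "c \<noteq> 0" "\<forall>i\<in>{1..n}. x i ^ k = c" "\<forall>e\<in>E. t * (\<Prod>j\<in>e. x j) = c"
      by blast
    define \<gamma> where "\<gamma> = exp (Ln c / of_nat k)"
    have "\<gamma> ^ k = c"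
      using c(1) k unfolding \<gamma>_def exp_of_nat_mult[symmetric] by simp
    moreover have "\<gamma> \<noteq> 0" by (simp add: \<gamma>_def)
    moreover have "\<exists>m. x i = \<gamma> * unit_root k m" if "i \<in> {1..n}" for i
    proof -
      have "(x i / \<gamma>) ^ k = 1" using c that \<open>\<gamma> ^ k = c\<close> by (simp add: power_divide)
      then obtain m where "x i / \<gamma> = unit_root k m" using ex_unit_root_eq k by blast
      then show ?thesis using \<open>\<gamma> \<noteq> 0\<close> by (auto simp: field_simps)
    qed
    then obtain \<alpha> where \<alpha>: "\<forall>i\<in>{1..n}. x i = \<gamma> * unit_root k (\<alpha> i)" by metis
    moreover have "t * unit_root k (\<Sum>j\<in>e. \<alpha> j) = 1" if e: "e \<in> E" for e
    proof -
      have "\<gamma> ^ k * (t * unit_root k (\<Sum>j\<in>e. \<alpha> j)) = t * (\<Prod>j\<in>e. x j)"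
        using edge_prod[OF e \<alpha>] by (simp add: mult.left_commute)
      also have "\<dots> = \<gamma> ^ k * 1"
        using c(3) e \<open>\<gamma> ^ k = c\<close> by simp
      finally have "\<gamma> ^ k * (t * unit_root k (\<Sum>j\<in>e. \<alpha> j)) = \<gamma> ^ k * 1" .
      then show ?thesis using \<open>\<gamma> \<noteq> 0\<close> by simp
    qed
    ultimately show "\<exists>\<gamma> \<alpha>. \<gamma> \<noteq> 0 \<and> (\<forall>i\<in>{1..n}. x i = \<gamma> * unit_root k (\<alpha> i)) \<and>
                       (\<forall>e\<in>E. t * unit_root k (\<Sum>j\<in>e. \<alpha> j) = 1)"
      using \<alpha> by blast
  next
    assume "\<exists>\<gamma> \<alpha>. \<gamma> \<noteq> 0 \<and> (\<forall>i\<in>{1..n}. x i = \<gamma> * unit_root k (\<alpha> i)) \<and>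
              (\<forall>e\<in>E. t * unit_root k (\<Sum>j\<in>e. \<alpha> j) = 1)"
    then obtain \<gamma> \<alpha> where "\<gamma> \<noteq> 0" and x: "\<forall>i\<in>{1..n}. x i = \<gamma> * unit_root k (\<alpha> i)"
      and e: "\<forall>e\<in>E. t * unit_root k (\<Sum>j\<in>e. \<alpha> j) = 1"
      by blast
    have "x i ^ k = \<gamma> ^ k" if "i \<in> {1..n}" for i
      using x that unit_root_power[OF k] by (simp add: power_mult_distrib)
    moreover have "t * (\<Prod>j\<in>e. x j) = \<gamma> ^ k" if "e \<in> E" for e
      using edge_prod[OF that x] e that by (simp add: mult.left_commute)
    ultimately show "\<exists>c. c \<noteq> 0 \<and> (\<forall>i\<in>{1..n}. x i ^ k = c) \<and> (\<forall>e\<in>E. t * (\<Prod>j\<in>e. x j) = c)"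
      using \<open>\<gamma> \<noteq> 0\<close> by (intro exI[of _ "\<gamma> ^ k"]) simp
  qed
qed

lemma tensor_eigenpair_deg_adj_zero_iff_unit_root_form:
  fixes x :: "nat \<Rightarrow> complex"
  assumes U: "uniform_hypergraph n k E" and k: "k > 0" and C: "hg_connected n E"
    and t: "norm t = 1"
  shows "tensor_eigenpair n k (\<lambda>is. deg_tensor E is - t * adj_tensor k E is) 0 x \<longleftrightarrow>
           (\<exists>\<gamma> \<alpha>. \<gamma> \<noteq> 0 \<and> (\<forall>i\<in>{1..n}. x i = \<gamma> * unit_root k (\<alpha> i)) \<and>
              (\<forall>e\<in>E. t * unit_root k (\<Sum>j\<in>e. \<alpha> j) = 1))"
proof -
  have "((\<exists>i\<in>{1..n}. x i \<noteq> 0) \<and>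
         (\<forall>i\<in>{1..n}. t * adj_form E x i = of_nat (hg_degree E i) * x i ^ (k - 1)))
        \<longleftrightarrow> (\<exists>c. c \<noteq> 0 \<and> (\<forall>i\<in>{1..n}. x i ^ k = c) \<and> (\<forall>e\<in>E. t * (\<Prod>j\<in>e. x j) = c))"
    using power_constant_if_eigen_equation[OF U k C t] eigen_equation_if_power_constant[OF U k]
    by blast
  then show ?thesis
    unfolding tensor_eigenpair_deg_adj_zero_iff[OF U k] power_constant_iff_unit_root_form[OF U k] .
qed

theorem theorem4p1:
  fixes n k :: nat and E :: "nat set set"
  assumes "k \<ge> 3" and "uniform_hypergraph n k E" and "hg_connected n E" and "E \<noteq> {}"
  shows "(\<forall>x :: nat \<Rightarrow> complex. tensor_eigenpair n k (laplacian_tensor k E) 0 x \<longleftrightarrow>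
            (\<exists>\<gamma> :: complex. \<exists>\<alpha> :: nat \<Rightarrow> int. \<gamma> \<noteq> 0 \<and>
               (\<forall>i\<in>{1..n}. x i = \<gamma> * exp (complex_of_real (2 * real_of_int (\<alpha> i) * pi / real k) * \<i>)) \<and>
               (\<forall>e\<in>E. \<exists>\<sigma> :: int. (\<Sum>j\<in>e. \<alpha> j) = \<sigma> * int k)))
       \<and> (\<forall>x :: nat \<Rightarrow> complex. tensor_eigenpair n k (signless_laplacian_tensor k E) 0 x \<longleftrightarrow>
            (\<exists>\<gamma> :: complex. \<exists>\<alpha> :: nat \<Rightarrow> int. \<gamma> \<noteq> 0 \<and>
               (\<forall>i\<in>{1..n}. x i = \<gamma> * exp (complex_of_real (2 * real_of_int (\<alpha> i) * pi / real k) * \<i>)) \<and>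
               (\<forall>e\<in>E. \<exists>\<sigma> :: int. 2 * (\<Sum>j\<in>e. \<alpha> j) = 2 * \<sigma> * int k + int k)))"
proof -
  have k: "k > 0" using assms(1) by simp
  note unit_root_form = tensor_eigenpair_deg_adj_zero_iff_unit_root_form[OF assms(2) k assms(3)]
  have "laplacian_tensor k E = (\<lambda>is. deg_tensor E is - 1 * adj_tensor k E is)"
    and "signless_laplacian_tensor k E = (\<lambda>is. deg_tensor E is - (-1) * adj_tensor k E is)"
    by (simp_all add: fun_eq_iff laplacian_tensor_def signless_laplacian_tensor_def)
  moreover have "-1 * u = 1 \<longleftrightarrow> u = -1" for u :: complex
    by (metis minus_minus mult_minus1)
  ultimately have
    "tensor_eigenpair n k (laplacian_tensor k E) 0 x \<longleftrightarrow>
       (\<exists>\<gamma> \<alpha>. \<gamma> \<noteq> 0 \<and> (\<forall>i\<in>{1..n}. x i = \<gamma> * unit_root k (\<alpha> i)) \<and>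
          (\<forall>e\<in>E. \<exists>\<sigma>. (\<Sum>j\<in>e. \<alpha> j) = \<sigma> * int k))"
    "tensor_eigenpair n k (signless_laplacian_tensor k E) 0 x \<longleftrightarrow>
       (\<exists>\<gamma> \<alpha>. \<gamma> \<noteq> 0 \<and> (\<forall>i\<in>{1..n}. x i = \<gamma> * unit_root k (\<alpha> i)) \<and>
          (\<forall>e\<in>E. \<exists>\<sigma>. 2 * (\<Sum>j\<in>e. \<alpha> j) = 2 * \<sigma> * int k + int k))" for x
    using unit_root_form[of 1 x] unit_root_form[of "-1" x]
    by (simp_all add: unit_root_eq_1_iff[OF k] unit_root_eq_minus_1_iff[OF k])
  then show ?thesis
    unfolding unit_root_def by blast
qed

end
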